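(* Let $U>0$. For every integer $L>\frac{8}{U}$ let $m_L$ be an integer with $\frac{L}{2} < m_L < \frac{3L}{2}$, and let $\xi_{m_L}$ denote the unique positive solution $\xi$ of $$\sinh(\xi) = -\frac{U}{4\cos(m_L\pi/L)}\,\frac{\sinh(\xi L)}{\cosh(\xi L) - (-1)^{m_L}}.$$ Suppose $\lim_{L\to\infty} m_L\frac{\pi}{L} = q$ with $\frac{\pi}{2} < q < \frac{3\pi}{2}$. Then $$\lim_{L\to\infty}\xi_{m_L} = -\operatorname{arsinh}\left(\frac{U}{4\cos(q)}\right).$$
   Context: For $N=2$ electrons and one down spin on a lattice of length $L$, a $k$-$\Lambda$ two-string solution of the Lieb-Wu equations $e^{ik_jL} = \frac{\Lambda-\sin k_j - iU/4}{\Lambda - \sin k_j + iU/4}$ ($j=1,2$), $\prod_{j}\frac{\Lambda-\sin k_j - iU/4}{\Lambda - \sin k_j + iU/4}=1$, has $k_{1,2} = q\mp i\xi$ with $q = m\pi/L$, $\xi>0$ solving the displayed equation and $\Lambda = \sin(q)\cosh(\xi)$; for $U>0$, $L>8/U$ and $L/2<m<3L/2$ the displayed equation has exactly one positive solution. The result says that in the limit $L\to\infty$ these strings approach the ideal string positions $\sinh\xi = -U/(4\cos q)$. *)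

theory Defs
  imports "HOL-Analysis.Analysis"
begin

end

theory Submission
  imports Defs "HOL-Real_Asymp.Real_Asymp"
begin

(* Write the equation as sinh xi = a_L * r_L with a_L = -U/(4 cos(m pi/L)) >= U/4 and
   r_L = sinh(xi L)/(cosh(xi L) -+ 1) >= xi L/(2 + xi L). Since sinh xi <= 2 xi for small xi,
   these bounds force xi_L >= min 1 (U/32) once U L > 64. Hence xi_L L -> infinity, so r_L -> 1,
   and sinh xi_L -> -U/(4 cos q); apply arsinh. *)

lemma sinh_le_two_mult:
  fixes x :: real assumes "0 \<le> x" "x \<le> 1" shows "sinh x \<le> 2 * x"
proof -
  have "exp x \<le> 1 + x + x\<^sup>2" using exp_bound assms by blast
  moreover have "1 - x \<le> exp (-x)" using exp_ge_add_one_self[of "-x"] by simp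
  moreover have "x\<^sup>2 \<le> x" using assms by (simp add: power2_eq_square mult_left_le)
  ultimately show ?thesis using assms unfolding sinh_field_def by argo
qed

lemma sinh_div_cosh_plus_one_ge:
  fixes y :: real assumes "0 \<le> y" shows "y / (2 + y) \<le> sinh y / (cosh y + 1)"
proof -
  define t where "t = exp y"
  have "t > 0" "1 + y \<le> t" unfolding t_def using exp_ge_add_one_self by auto
  have "sinh y = (t - 1) * (t + 1) / (2 * t)" "cosh y + 1 = (t + 1) * (t + 1) / (2 * t)"
    using \<open>t > 0\<close> unfolding sinh_def cosh_def exp_minus t_def[symmetric]
    by (simp_all add: field_simps)
  then have "sinh y / (cosh y + 1) = (t - 1) / (t + 1)"
    using \<open>t > 0\<close> by simp
  moreover have "y / (2 + y) \<le> (t - 1) / (t + 1)"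
    using \<open>t > 0\<close> \<open>1 + y \<le> t\<close> assms by (simp add: divide_simps algebra_simps)
  ultimately show ?thesis by simp
qed

lemma sinh_div_cosh_diff_ge:
  fixes y s :: real assumes "0 < y" "\<bar>s\<bar> \<le> 1"
  shows "y / (2 + y) \<le> sinh y / (cosh y - s)"
proof -
  have "1 < cosh y" using cosh_real_strict_mono[of 0 y] assms by simp
  then have "sinh y / (cosh y + 1) \<le> sinh y / (cosh y - s)"
    using assms by (intro divide_left_mono) auto
  then show ?thesis using sinh_div_cosh_plus_one_ge[of y] assms by linarith
qed

lemma tendsto_sinh_div_cosh_diff:
  fixes y s :: "'a \<Rightarrow> real"
  assumes "filterlim y at_top F" "\<forall>\<^sub>F x in F. \<bar>s x\<bar> \<le> 1"
  shows "((\<lambda>x. sinh (y x) / (cosh (y x) - s x)) \<longlongrightarrow> 1) F"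
proof -
  have "((\<lambda>t::real. (exp (-t) + 1) / (cosh t - 1)) \<longlongrightarrow> 0) at_top" by real_asymp
  then have bound_lim: "((\<lambda>x. (exp (- y x) + 1) / (cosh (y x) - 1)) \<longlongrightarrow> 0) F"
    using assms(1) by (rule filterlim_compose)
  have "\<forall>\<^sub>F x in F. 0 < y x" using assms(1) by (simp add: filterlim_at_top_dense)
  then have "\<forall>\<^sub>F x in F. norm (sinh (y x) / (cosh (y x) - s x) - 1) \<le> (exp (- y x) + 1) / (cosh (y x) - 1)"
    using assms(2)
  proof eventually_elim
    case (elim x)
    have "1 < cosh (y x)" using cosh_real_strict_mono[of 0 "y x"] elim by simp
    have "sinh (y x) / (cosh (y x) - s x) - 1 = (s x - exp (- y x)) / (cosh (y x) - s x)"
      using \<open>1 < cosh (y x)\<close> elim cosh_minus_sinh[of "y x"] by (simp add: field_simps)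
    also have "norm \<dots> = \<bar>s x - exp (- y x)\<bar> / (cosh (y x) - s x)"
      using \<open>1 < cosh (y x)\<close> elim by (simp add: abs_divide)
    also have "\<dots> \<le> (exp (- y x) + 1) / (cosh (y x) - 1)"
    proof (rule frac_le)
      show "\<bar>s x - exp (- y x)\<bar> \<le> exp (- y x) + 1"
        using elim(2) exp_gt_zero[of "- y x"] by linarith
    qed (use \<open>1 < cosh (y x)\<close> elim(2) in auto)
    finally show ?case .
  qed
  then have "((\<lambda>x. sinh (y x) / (cosh (y x) - s x) - 1) \<longlongrightarrow> 0) F"
    using bound_lim by (rule Lim_null_comparison)
  then show ?thesis by (simp add: LIM_zero_iff)
qed

lemma quarter_le_minus_div_cos:
  fixes U t :: real assumes "0 < U" "pi / 2 < t" "t < 3 * pi / 2"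
  shows "U / 4 \<le> - U / (4 * cos t)"
proof -
  have "cos t < 0" "- 1 \<le> cos t" using cos_lt_zero_pi assms by auto
  then show ?thesis
    using assms(1) mult_left_mono[of "- 1" "cos t" U] by (simp add: field_simps)
qed

lemma string_solution_lower_bound:
  fixes U L A s x :: real
  assumes "0 < U" "64 < U * L" "U / 4 \<le> A" "\<bar>s\<bar> \<le> 1" "0 < x"
    and "sinh x = A * (sinh (x * L) / (cosh (x * L) - s))"
  shows "min 1 (U / 32) \<le> x"
proof (rule ccontr)
  assume "\<not> min 1 (U / 32) \<le> x"
  then have "x \<le> 1" "x < U / 32" by auto
  have "0 < L" using zero_less_mult_pos[of U L] assms(1,2) by simp
  then have "0 < x * L" using assms(5) by simp
  have "(U / 4) * (x * L / (2 + x * L)) \<le> A * (sinh (x * L) / (cosh (x * L) - s))"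
    using sinh_div_cosh_diff_ge[OF \<open>0 < x * L\<close> assms(4)] assms(1,3) \<open>0 < x * L\<close>
    by (intro mult_mono) auto
  also have "\<dots> \<le> 2 * x" using sinh_le_two_mult[of x] assms(5,6) \<open>x \<le> 1\<close> by simp
  finally have "x * (U * L) \<le> x * (8 * (2 + x * L))"
    using \<open>0 < x * L\<close> by (simp add: field_simps)
  then have "U * L \<le> 8 * (2 + x * L)"
    using assms(5) by (rule mult_left_le_imp_le)
  moreover have "x * L \<le> U / 32 * L" using \<open>x < U / 32\<close> \<open>0 < L\<close> by simp
  ultimately show False using assms(2) by simp
qed

lemma mult_pi_div_between:
  fixes L m :: real assumes "0 < L" "L / 2 < m" "m < 3 * L / 2"
  shows "pi / 2 < m * pi / L" "m * pi / L < 3 * pi / 2"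
  using assms by (simp_all add: field_simps)

lemma filterlim_mult_real_at_top:
  fixes x :: "nat \<Rightarrow> real" assumes "0 < c" "\<forall>\<^sub>F n in sequentially. c \<le> x n"
  shows "filterlim (\<lambda>n. x n * real n) at_top sequentially"
proof (rule filterlim_at_top_mono)
  show "filterlim (\<lambda>n. c * real n) at_top sequentially"
    using assms(1)
    by (intro filterlim_tendsto_pos_mult_at_top[OF tendsto_const] filterlim_real_sequentially)
  show "\<forall>\<^sub>F n in sequentially. c * real n \<le> x n * real n"
    using assms(2) by eventually_elim (simp add: mult_right_mono)
qed

theorem mainTheorem4:
  fixes U q :: real and m :: "nat \<Rightarrow> int" and \<xi> :: "nat \<Rightarrow> real"
  assumes U_pos: "U > 0"
    and m_range: "\<And>L. real L > 8 / U \<Longrightarrow> real L / 2 < real_of_int (m L) \<and> real_of_int (m L) < 3 * real L / 2"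
    and xi_sol: "\<And>L. real L > 8 / U \<Longrightarrow> \<xi> L > 0 \<and>
        sinh (\<xi> L) = - U / (4 * cos (real_of_int (m L) * pi / real L)) *
          (sinh (\<xi> L * real L) / (cosh (\<xi> L * real L) - (-1) powi (m L)))"
    and xi_unique: "\<And>L \<eta>. real L > 8 / U \<Longrightarrow> \<eta> > 0 \<Longrightarrow>
        sinh \<eta> = - U / (4 * cos (real_of_int (m L) * pi / real L)) *
          (sinh (\<eta> * real L) / (cosh (\<eta> * real L) - (-1) powi (m L))) \<Longrightarrow> \<eta> = \<xi> L"
    and m_lim: "(\<lambda>L. real_of_int (m L) * pi / real L) \<longlonglongrightarrow> q"
    and q_range: "pi / 2 < q" "q < 3 * pi / 2"
  shows "\<xi> \<longlonglongrightarrow> - arsinh (U / (4 * cos q))"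
proof -
  define a where "a L = - U / (4 * cos (real_of_int (m L) * pi / real L))" for L
  define r where "r L = sinh (\<xi> L * real L) / (cosh (\<xi> L * real L) - (-1) powi (m L))" for L
  have "\<forall>\<^sub>F L in sequentially. 64 / U < real L"
    using filterlim_real_sequentially by (simp add: filterlim_at_top_dense)
  then have sol: "\<forall>\<^sub>F L in sequentially. sinh (\<xi> L) = a L * r L \<and> min 1 (U / 32) \<le> \<xi> L"
  proof eventually_elim
    case (elim L)
    then have "8 / U < real L" "64 < U * real L"
      using U_pos by (simp_all add: field_simps)
    moreover have "0 < real L"
      using U_pos by (intro order.strict_trans[OF _ \<open>8 / U < real L\<close>]) simp
    ultimately have "U / 4 \<le> a L" "0 < \<xi> L" "sinh (\<xi> L) = a L * r L"
      using xi_sol[of L] m_range[of L] mult_pi_div_between[of "real L" "real_of_int (m L)"]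
        quarter_le_minus_div_cos[OF U_pos] unfolding a_def r_def by auto
    then show ?case
      using string_solution_lower_bound[OF U_pos \<open>64 < U * real L\<close>, of "a L" "(-1) powi m L"]
      by (simp add: r_def power_int_abs)
  qed
  then have "filterlim (\<lambda>L. \<xi> L * real L) at_top sequentially"
    using U_pos by (intro filterlim_mult_real_at_top[of "min 1 (U / 32)"]) (auto elim: eventually_mono)
  then have "r \<longlonglongrightarrow> 1"
    unfolding r_def by (rule tendsto_sinh_div_cosh_diff) (simp add: power_int_abs)
  moreover have "a \<longlonglongrightarrow> - U / (4 * cos q)"
    unfolding a_def using cos_lt_zero_pi[OF q_range] by (intro tendsto_intros m_lim) simp
  ultimately have "(\<lambda>L. sinh (\<xi> L)) \<longlonglongrightarrow> - U / (4 * cos q)"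
    using tendsto_mult tendsto_cong[OF eventually_mono[OF sol]] by fastforce
  then have "(\<lambda>L. arsinh (sinh (\<xi> L))) \<longlonglongrightarrow> arsinh (- U / (4 * cos q))"
    by (rule tendsto_arsinh)
  then show ?thesis by (simp add: arsinh_sinh_real)
qed

end
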